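(* Let $(\mathcal G,\mathcal Z,\pi)$ be an uncertainty triplet, $X\in\mathcal Z$, and $\rho$ a compatible objective functional. Suppose that $\mathcal G_X(\rho)$ contains a bijection $g$, and that $\rho$ is $\pi_g$-continuous on $g(\mathcal Z)=\{g(Z):Z\in\mathcal Z\}$, where $\pi_g(g(Y),g(Z)):=\pi(Y,Z)$ for $Y,Z\in\mathcal Z$. Then $\rho$ is robust at $X$ relative to $(\mathcal G,\mathcal Z,\pi)$.
   Context: $\mathcal G_n$ denotes the set of measurable functions $\mathbb R^n\to\mathbb R$. An uncertainty triplet $(\mathcal G,\mathcal Z,\pi)$ consists of $\mathcal G\subset\mathcal G_n$ and a pseudo-metric space $(\mathcal Z,\pi)$ of $n$-dimensional random vectors on an atomless probability space. An objective functional $\rho$ is compatible with it if $\rho$ maps $\{g(Z):Z\in\mathcal Z,g\in\mathcal G\}$ to $\mathbb R\cup\{+\infty\}$ and $\rho(g(Y))=\rho(g(Z))$ whenever $g\in\mathcal G$, $Y,Z\in\mathcal Z$, $\pi(Y,Z)=0$. For $X\in\mathcal Z$, $\mathcal G_X(\rho)=\{g\in\mathcal G:\rho(g(X))=\inf_{h\in\mathcal G}\rho(h(X))\}$. $\rho$ is robust at $X$ relative to $(\mathcal G,\mathcal Z,\pi)$ if there exists $g_X\in\mathcal G_X(\rho)$ such that $\mathcal Z\ni Y\mapsto\rho(g_X(Y))$ is $\pi$-continuous at $Y=X$. *)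

theory Defs
  imports "HOL-Probability.Probability"
begin

definition atomless :: "'a measure \<Rightarrow> bool" where
  "atomless M \<longleftrightarrow> (\<forall>A\<in>sets M. measure M A > 0 \<longrightarrow>
      (\<exists>B\<in>sets M. B \<subseteq> A \<and> 0 < measure M B \<and> measure M B < measure M A))"

definition pseudo_metric_on :: "'z set \<Rightarrow> ('z \<Rightarrow> 'z \<Rightarrow> real) \<Rightarrow> bool" where
  "pseudo_metric_on S d \<longleftrightarrow>
     (\<forall>x\<in>S. d x x = 0) \<and> (\<forall>x\<in>S. \<forall>y\<in>S. d x y \<ge> 0 \<and> d x y = d y x) \<and>
     (\<forall>x\<in>S. \<forall>y\<in>S. \<forall>z\<in>S. d x z \<le> d x y + d y z)"

definition uncertainty_triplet ::
  "'a measure \<Rightarrow> ((real^'n) \<Rightarrow> real) set \<Rightarrow> ('a \<Rightarrow> real^'n) set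
     \<Rightarrow> (('a \<Rightarrow> real^'n) \<Rightarrow> ('a \<Rightarrow> real^'n) \<Rightarrow> real) \<Rightarrow> bool" where
  "uncertainty_triplet M G Z pz \<longleftrightarrow>
     prob_space M \<and> atomless M \<and>
     G \<subseteq> borel_measurable borel \<and>
     Z \<subseteq> borel_measurable M \<and>
     pseudo_metric_on Z pz"

definition compatible ::
  "((real^'n) \<Rightarrow> real) set \<Rightarrow> ('a \<Rightarrow> real^'n) set
     \<Rightarrow> (('a \<Rightarrow> real^'n) \<Rightarrow> ('a \<Rightarrow> real^'n) \<Rightarrow> real) \<Rightarrow> (('a \<Rightarrow> real) \<Rightarrow> ereal) \<Rightarrow> bool" where
  "compatible G Z pz rho \<longleftrightarrow>
     (\<forall>g\<in>G. \<forall>Y\<in>Z. rho (g \<circ> Y) \<noteq> -\<infinity>) \<and>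
     (\<forall>g\<in>G. \<forall>Y\<in>Z. \<forall>W\<in>Z. pz Y W = 0 \<longrightarrow> rho (g \<circ> Y) = rho (g \<circ> W))"

definition optimal_set ::
  "((real^'n) \<Rightarrow> real) set \<Rightarrow> (('a \<Rightarrow> real) \<Rightarrow> ereal) \<Rightarrow> ('a \<Rightarrow> real^'n)
     \<Rightarrow> ((real^'n) \<Rightarrow> real) set" where
  "optimal_set G rho X = {g\<in>G. rho (g \<circ> X) = (INF h\<in>G. rho (h \<circ> X))}"

definition pcont_at :: "('z \<Rightarrow> 'z \<Rightarrow> real) \<Rightarrow> 'z set \<Rightarrow> ('z \<Rightarrow> ereal) \<Rightarrow> 'z \<Rightarrow> bool" where
  "pcont_at d S f x \<longleftrightarrow>
     (\<forall>U. open U \<and> f x \<in> U \<longrightarrow> (\<exists>\<delta>>0. \<forall>y\<in>S. d y x < \<delta> \<longrightarrow> f y \<in> U))"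

definition robust_at ::
  "((real^'n) \<Rightarrow> real) set \<Rightarrow> ('a \<Rightarrow> real^'n) set
     \<Rightarrow> (('a \<Rightarrow> real^'n) \<Rightarrow> ('a \<Rightarrow> real^'n) \<Rightarrow> real) \<Rightarrow> (('a \<Rightarrow> real) \<Rightarrow> ereal)
     \<Rightarrow> ('a \<Rightarrow> real^'n) \<Rightarrow> bool" where
  "robust_at G Z pz rho X \<longleftrightarrow>
     (\<exists>gX\<in>optimal_set G rho X. pcont_at pz Z (\<lambda>Y. rho (gX \<circ> Y)) X)"

text \<open>The induced pseudo-metric pi_g on g(Z): pi_g(g(Y), g(W)) = pi(Y, W)
  (well defined when g is a bijection).\<close>
definition induced_pm ::
  "((real^'n) \<Rightarrow> real) \<Rightarrow> ('a \<Rightarrow> real^'n) set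
     \<Rightarrow> (('a \<Rightarrow> real^'n) \<Rightarrow> ('a \<Rightarrow> real^'n) \<Rightarrow> real)
     \<Rightarrow> ('a \<Rightarrow> real) \<Rightarrow> ('a \<Rightarrow> real) \<Rightarrow> real" where
  "induced_pm g Z pz U V =
     pz (THE Y. Y \<in> Z \<and> g \<circ> Y = U) (THE W. W \<in> Z \<and> g \<circ> W = V)"

end

theory Submission
  imports Defs
begin

text \<open>Composition with an injective \<open>g\<close> is injective on random vectors, so \<open>\<pi>\<^sub>g\<close> is just
  \<open>\<pi>\<close> transported along \<open>Y \<mapsto> g \<circ> Y\<close>. Continuity of \<open>\<rho>\<close> at \<open>g \<circ> X\<close> for \<open>\<pi>\<^sub>g\<close> is then
  literally continuity of \<open>Y \<mapsto> \<rho> (g \<circ> Y)\<close> at \<open>X\<close> for \<open>\<pi>\<close>, and the optimal \<open>g\<close> itself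
  witnesses robustness.\<close>

lemma inj_comp_left:
  assumes "inj g"
  shows "inj (\<lambda>Y. g \<circ> Y)"
  using assms by (auto intro!: injI simp: fun_eq_iff inj_eq)

lemma induced_pm_comp:
  assumes "inj g" "Y \<in> Z" "W \<in> Z"
  shows "induced_pm g Z pz (g \<circ> Y) (g \<circ> W) = pz Y W"
proof -
  have "(THE V. V \<in> Z \<and> g \<circ> V = g \<circ> U) = U" if "U \<in> Z" for U
    using that injD[OF inj_comp_left[OF assms(1)]] by (intro the_equality) auto
  then show ?thesis
    unfolding induced_pm_def using assms(2,3) by simp
qed

lemma pcont_at_comp_image:
  assumes "pcont_at d' (f ` S) h (f x)"
    and "\<And>y. y \<in> S \<Longrightarrow> d' (f y) (f x) \<le> d y x"
  shows "pcont_at d S (\<lambda>y. h (f y)) x"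
  unfolding pcont_at_def
proof (intro allI impI)
  fix U :: "ereal set"
  assume "open U \<and> h (f x) \<in> U"
  then obtain \<delta> where "\<delta> > 0" and \<delta>: "\<forall>v\<in>f ` S. d' v (f x) < \<delta> \<longrightarrow> h v \<in> U"
    using assms(1) unfolding pcont_at_def by blast
  have "\<forall>y\<in>S. d y x < \<delta> \<longrightarrow> h (f y) \<in> U"
    using \<delta> assms(2) by (meson image_eqI le_less_trans)
  with \<open>\<delta> > 0\<close> show "\<exists>\<delta>>0. \<forall>y\<in>S. d y x < \<delta> \<longrightarrow> h (f y) \<in> U"
    by blast
qed

theorem proposition1:
  fixes M :: "'a measure"
    and G :: "((real^'n) \<Rightarrow> real) set"
    and Z :: "('a \<Rightarrow> real^'n) set"
    and pz :: "('a \<Rightarrow> real^'n) \<Rightarrow> ('a \<Rightarrow> real^'n) \<Rightarrow> real"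
    and rho :: "('a \<Rightarrow> real) \<Rightarrow> ereal"
    and X :: "'a \<Rightarrow> real^'n"
    and g :: "(real^'n) \<Rightarrow> real"
  assumes "uncertainty_triplet M G Z pz"
    and "X \<in> Z"
    and "compatible G Z pz rho"
    and "g \<in> optimal_set G rho X"
    and "bij g"
    and "\<forall>U\<in>(\<lambda>Y. g \<circ> Y) ` Z. pcont_at (induced_pm g Z pz) ((\<lambda>Y. g \<circ> Y) ` Z) rho U"
  shows "robust_at G Z pz rho X"
proof -
  have "inj g"
    using \<open>bij g\<close> by (rule bij_is_inj)
  have "pcont_at (induced_pm g Z pz) ((\<lambda>Y. g \<circ> Y) ` Z) rho (g \<circ> X)"
    using assms(6) \<open>X \<in> Z\<close> by blast
  then have "pcont_at pz Z (\<lambda>Y. rho (g \<circ> Y)) X"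
    by (rule pcont_at_comp_image) (simp add: induced_pm_comp[OF \<open>inj g\<close> _ \<open>X \<in> Z\<close>])
  then show ?thesis
    unfolding robust_at_def using \<open>g \<in> optimal_set G rho X\<close> by blast
qed

end
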